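(* Let $d\ge1$, $0<c\le\infty$, $X=(0,c)$, $X_{\mathrm{SYM}}=(-c,0)\cup(0,c)$, $\mathbb{X}=(X_{\mathrm{SYM}})^d$. For $i=1,\dots,d$ let $w_i\in C^2(X)$ be strictly positive, $p_i\in C^2(X)$ real-valued and nonvanishing, $q_i\in C^1(X)$ real-valued, $a_i\ge0$ constants, $A=\sum_ia_i$, $\mu_i(dx)=w_i(x)dx$ on $X$, $\delta_i=p_i\frac{d}{dx}+q_i$, $\delta_i^*=-p_i\frac{d}{dx}+q_i-p_i\frac{w_i'}{w_i}-p_i'$, $L_i=a_i+\delta_i^*\delta_i$. Assume for each $i$ there is an orthonormal basis $\{\varphi^{(i)}_k:k\in\mathbb{N}\}$ of $L^2(X,\mu_i)$ with $\varphi^{(i)}_k\in C^\infty(X)$, $L_i\varphi^{(i)}_k=\lambda^{(i)}_k\varphi^{(i)}_k$, $\lambda^{(i)}_0<\lambda^{(i)}_1<\dots\to\infty$, $\delta_i\varphi^{(i)}_k\in L^2(X,\mu_i)$ and $\langle\delta_i\varphi^{(i)}_k,\delta_i\varphi^{(i)}_m\rangle_{\mu_i}=\langle\delta_i^*\delta_i\varphi^{(i)}_k,\varphi^{(i)}_m\rangle_{\mu_i}$ for all $k,m$; assume moreover $a_i=\lambda^{(i)}_0$ for every $i$. Extend $w_i,p_i,\varphi^{(i)}_k$ evenly and $q_i$ oddly to $X_{\mathrm{SYM}}$ (and $\delta_i$ accordingly), and let $\mu(dx)=w_1(x_1)\cdots w_d(x_d)dx$ on $\mathbb{X}$. Define $$\Phi^{(i)}_{n}=\tfrac1{\sqrt2}\varphi^{(i)}_{n/2}\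 (n\text{ even}),\qquad \Phi^{(i)}_{n}=-\tfrac1{\sqrt2}\big(\lambda^{(i)}_{(n+1)/2}-a_i\big)^{-1/2}\delta_i\varphi^{(i)}_{(n+1)/2}\ (n\text{ odd}),$$ $\Phi_n=\Phi^{(1)}_{n_1}\otimes\cdots\otimes\Phi^{(d)}_{n_d}$ for $n\in\mathbb{N}^d$, and let $D_j$, $\mathbb{L}$ be $$D_jf(x)=p_j(x_j)\partial_{x_j}f(x)+q_j(x_j)\tfrac{f(x)+f(\sigma_jx)}{2}+\Big[p_j(x_j)\tfrac{w_j'(x_j)}{w_j(x_j)}+p_j'(x_j)-q_j(x_j)\Big]\tfrac{f(x)-f(\sigma_jx)}{2},\qquad \mathbb{L}=A-\sum_{i=1}^dD_i^2,$$ with $\sigma_j$ the reflection changing the sign of the $j$th coordinate. Then for all $n\in\mathbb{N}^d$, $$\mathbb{L}\Phi_n=\Big(\lambda^{(1)}_{\lfloor\frac{n_1+1}2\rfloor}+\dots+\lambda^{(d)}_{\lfloor\frac{n_d+1}2\rfloor}\Big)\Phi_n.$$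
   Context: $\mathbb{N}=\{0,1,2,\dots\}$; $\lfloor\cdot\rfloor$ is the floor function. *)

theory Defs
  imports "HOL-Analysis.Analysis"
begin

definition halfX :: "ereal \<Rightarrow> real set" where
  "halfX c = {x. 0 < x \<and> ereal x < c}"

definition symX :: "ereal \<Rightarrow> real set" where
  "symX c = {x. x \<noteq> 0 \<and> ereal \<bar>x\<bar> < c}"

definition Ck_on :: "nat \<Rightarrow> real set \<Rightarrow> (real \<Rightarrow> real) \<Rightarrow> bool" where
  "Ck_on k S f \<longleftrightarrow> (\<forall>m<k. \<forall>x\<in>S. ((deriv ^^ m) f) differentiable (at x))
      \<and> continuous_on S ((deriv ^^ k) f)"

definition Cinf_on :: "real set \<Rightarrow> (real \<Rightarrow> real) \<Rightarrow> bool" where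
  "Cinf_on S f \<longleftrightarrow> (\<forall>k. Ck_on k S f)"

definition wmeasure :: "real set \<Rightarrow> (real \<Rightarrow> real) \<Rightarrow> real measure" where
  "wmeasure S w = density (restrict_space lborel S) (\<lambda>x. ennreal (w x))"

definition inL2 :: "real measure \<Rightarrow> (real \<Rightarrow> real) \<Rightarrow> bool" where
  "inL2 M f \<longleftrightarrow> f \<in> borel_measurable M \<and> integrable M (\<lambda>x. (f x)\<^sup>2)"

definition inner_L2 :: "real measure \<Rightarrow> (real \<Rightarrow> real) \<Rightarrow> (real \<Rightarrow> real) \<Rightarrow> real" where
  "inner_L2 M f g = (LINT x|M. f x * g x)"

definition ONB_L2 :: "real measure \<Rightarrow> (nat \<Rightarrow> real \<Rightarrow> real) \<Rightarrow> bool" where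
  "ONB_L2 M \<phi> \<longleftrightarrow> (\<forall>k. inL2 M (\<phi> k))
     \<and> (\<forall>k m. inner_L2 M (\<phi> k) (\<phi> m) = (if k = m then 1 else 0))
     \<and> (\<forall>f. inL2 M f \<longrightarrow> (\<forall>k. inner_L2 M f (\<phi> k) = 0) \<longrightarrow> (AE x in M. f x = 0))"

text \<open>\<delta> = p d/dx + q and its formal adjoint w.r.t. w(x)dx.\<close>
definition delta :: "(real \<Rightarrow> real) \<Rightarrow> (real \<Rightarrow> real) \<Rightarrow> (real \<Rightarrow> real) \<Rightarrow> real \<Rightarrow> real" where
  "delta p q f x = p x * deriv f x + q x * f x"

definition delta_adj :: "(real \<Rightarrow> real) \<Rightarrow> (real \<Rightarrow> real) \<Rightarrow> (real \<Rightarrow> real)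
     \<Rightarrow> (real \<Rightarrow> real) \<Rightarrow> real \<Rightarrow> real" where
  "delta_adj w p q f x = - p x * deriv f x + q x * f x
      - p x * (deriv w x / w x) * f x - deriv p x * f x"

definition even_ext :: "(real \<Rightarrow> real) \<Rightarrow> real \<Rightarrow> real" where
  "even_ext f x = f \<bar>x\<bar>"

definition odd_ext :: "(real \<Rightarrow> real) \<Rightarrow> real \<Rightarrow> real" where
  "odd_ext f x = sgn x * f \<bar>x\<bar>"

definition Phi1 :: "(real \<Rightarrow> real) \<Rightarrow> (real \<Rightarrow> real) \<Rightarrow> (nat \<Rightarrow> real \<Rightarrow> real)
     \<Rightarrow> (nat \<Rightarrow> real) \<Rightarrow> real \<Rightarrow> nat \<Rightarrow> real \<Rightarrow> real" where
  "Phi1 p q \<phi> lam a n x =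
     (if even n then (1 / sqrt 2) * even_ext (\<phi> (n div 2)) x
      else - (1 / sqrt 2) * (1 / sqrt (lam ((n + 1) div 2) - a))
             * delta (even_ext p) (odd_ext q) (even_ext (\<phi> ((n + 1) div 2))) x)"

definition PhiT :: "('d::finite \<Rightarrow> real \<Rightarrow> real) \<Rightarrow> ('d \<Rightarrow> real \<Rightarrow> real)
     \<Rightarrow> ('d \<Rightarrow> nat \<Rightarrow> real \<Rightarrow> real) \<Rightarrow> ('d \<Rightarrow> nat \<Rightarrow> real) \<Rightarrow> ('d \<Rightarrow> real)
     \<Rightarrow> nat^'d \<Rightarrow> real^'d \<Rightarrow> real" where
  "PhiT p q \<phi> lam a n x = (\<Prod>i\<in>UNIV. Phi1 (p i) (q i) (\<phi> i) (lam i) (a i) (n $ i) (x $ i))"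

definition refl :: "'d::finite \<Rightarrow> real^'d \<Rightarrow> real^'d" where
  "refl j x = (\<chi> k. if k = j then - (x $ k) else x $ k)"

definition upd :: "real^'d \<Rightarrow> 'd::finite \<Rightarrow> real \<Rightarrow> real^'d" where
  "upd x j t = (\<chi> k. if k = j then t else x $ k)"

definition pderiv_at :: "'d::finite \<Rightarrow> (real^'d \<Rightarrow> real) \<Rightarrow> real^'d \<Rightarrow> real" where
  "pderiv_at j f x = deriv (\<lambda>t. f (upd x j t)) (x $ j)"

definition Dop :: "('d::finite \<Rightarrow> real \<Rightarrow> real) \<Rightarrow> ('d \<Rightarrow> real \<Rightarrow> real) \<Rightarrow> ('d \<Rightarrow> real \<Rightarrow> real)
     \<Rightarrow> 'd \<Rightarrow> (real^'d \<Rightarrow> real) \<Rightarrow> real^'d \<Rightarrow> real" where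
  "Dop w p q j f x =
     (let pe = even_ext (p j); we = even_ext (w j); qo = odd_ext (q j); y = x $ j in
      pe y * pderiv_at j f x
      + qo y * ((f x + f (refl j x)) / 2)
      + (pe y * (deriv we y / we y) + deriv pe y - qo y) * ((f x - f (refl j x)) / 2))"

definition Lop :: "('d::finite \<Rightarrow> real \<Rightarrow> real) \<Rightarrow> ('d \<Rightarrow> real \<Rightarrow> real) \<Rightarrow> ('d \<Rightarrow> real \<Rightarrow> real)
     \<Rightarrow> real \<Rightarrow> (real^'d \<Rightarrow> real) \<Rightarrow> real^'d \<Rightarrow> real" where
  "Lop w p q A f x = A * f x - (\<Sum>i\<in>UNIV. Dop w p q i (Dop w p q i f) x)"

end

theory Submission
  imports Defs
begin

text \<open>On the symmetric set the operator \<open>D\<^sub>j\<close> acts on \<open>\<Phi>\<^sub>n\<close> only through the \<open>j\<close>-th factor,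
  where it is a one-dimensional operator swapping the even extension \<open>E\<close> of \<open>\<phi>\<^sub>k\<close> and the odd
  extension \<open>O\<close> of \<open>\<delta>\<phi>\<^sub>k\<close>: on even functions it is the extended \<open>\<delta>\<close>, so \<open>D E = O\<close>, and on odd
  functions it is \<open>-\<delta>\<^sup>*\<close>, so \<open>D O = -\<delta>\<^sup>*\<delta>\<phi>\<^sub>k = (a - \<lambda>\<^sub>k) E\<close> by the eigenvalue equation.
  Since \<open>\<Phi>\<^sup>(\<^sup>j\<^sup>)\<^sub>n\<close> is a multiple of \<open>E\<close> or of \<open>O\<close>, \<open>D\<^sub>j\<^sup>2 \<Phi>\<^sub>n = (a\<^sub>j - \<lambda>\<^sub>k) \<Phi>\<^sub>n\<close>, and summing over \<open>j\<close>
  gives the claim.\<close>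

lemma open_symX: "open (symX c)"
proof -
  have "symX c = {x. x \<noteq> 0} \<inter> {x. ereal \<bar>x\<bar> < c}" by (auto simp: symX_def)
  moreover have "open {x::real. x \<noteq> 0}" by (simp add: open_Collect_neq)
  moreover have "open {x::real. ereal \<bar>x\<bar> < c}"
    by (intro open_Collect_less continuous_intros)
  ultimately show ?thesis by auto
qed

lemma symX_iff_abs_halfX: "y \<in> symX c \<longleftrightarrow> \<bar>y\<bar> \<in> halfX c"
  by (auto simp: symX_def halfX_def)

lemma symX_uminus: "y \<in> symX c \<Longrightarrow> - y \<in> symX c"
  by (auto simp: symX_def)

lemma symX_nonzero: "y \<in> symX c \<Longrightarrow> y \<noteq> 0"
  by (simp add: symX_def)

lemma Ck_on_differentiable:
  assumes "Ck_on k S f" "m < k" "x \<in> S"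
  shows "(deriv ^^ m) f differentiable (at x)"
proof -
  from assms(1) have "\<forall>m<k. \<forall>x\<in>S. (deriv ^^ m) f differentiable (at x)"
    unfolding Ck_on_def by (rule conjunct1)
  with assms(2,3) show ?thesis by simp
qed

lemma has_real_derivative_even_ext:
  assumes "y \<noteq> 0" "(g has_real_derivative D) (at \<bar>y\<bar>)"
  shows "(even_ext g has_real_derivative sgn y * D) (at y)"
proof (cases "y > 0")
  case True
  have "(g has_real_derivative sgn y * D) (at y)" using assms True by simp
  then show ?thesis unfolding even_ext_def[abs_def]
    by (rule has_field_derivative_transform_within_open[where S="{0<..}"]) (use True in auto)
next
  case False
  with assms have y: "y < 0" by auto
  have "((\<lambda>t. g (- t)) has_real_derivative - D) (at y)"
    by (rule DERIV_mirror[THEN iffD1]) (use assms y in simp)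
  then have "((\<lambda>t. g (- t)) has_real_derivative sgn y * D) (at y)"
    using y by simp
  then show ?thesis unfolding even_ext_def[abs_def]
    by (rule has_field_derivative_transform_within_open[where S="{..<0}"]) (use y in auto)
qed

lemma has_real_derivative_odd_ext:
  assumes "y \<noteq> 0" "(g has_real_derivative D) (at \<bar>y\<bar>)"
  shows "(odd_ext g has_real_derivative D) (at y)"
proof (cases "y > 0")
  case True
  have "(g has_real_derivative D) (at y)" using assms True by simp
  then show ?thesis unfolding odd_ext_def[abs_def]
    by (rule has_field_derivative_transform_within_open[where S="{0<..}"]) (use True in auto)
next
  case False
  with assms have y: "y < 0" by auto
  have "((\<lambda>t. g (- t)) has_real_derivative - D) (at y)"
    by (rule DERIV_mirror[THEN iffD1]) (use assms y in simp)
  then have "((\<lambda>t. - g (- t)) has_real_derivative D) (at y)"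
    using DERIV_minus by fastforce
  then show ?thesis unfolding odd_ext_def[abs_def]
    by (rule has_field_derivative_transform_within_open[where S="{..<0}"]) (use y in auto)
qed

lemma differentiable_even_ext:
  assumes "y \<noteq> 0" "g differentiable (at \<bar>y\<bar>)"
  shows "even_ext g differentiable (at y)"
    and "deriv (even_ext g) y = sgn y * deriv g \<bar>y\<bar>"
proof -
  have "(even_ext g has_real_derivative sgn y * deriv g \<bar>y\<bar>) (at y)"
    using assms by (intro has_real_derivative_even_ext)
      (simp_all add: DERIV_deriv_iff_real_differentiable)
  then show "even_ext g differentiable (at y)" "deriv (even_ext g) y = sgn y * deriv g \<bar>y\<bar>"
    by (auto simp: real_differentiable_def DERIV_imp_deriv)
qed

lemma differentiable_odd_ext:
  assumes "y \<noteq> 0" "g differentiable (at \<bar>y\<bar>)"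
  shows "odd_ext g differentiable (at y)"
    and "deriv (odd_ext g) y = deriv g \<bar>y\<bar>"
proof -
  have "(odd_ext g has_real_derivative deriv g \<bar>y\<bar>) (at y)"
    using assms by (intro has_real_derivative_odd_ext)
      (simp_all add: DERIV_deriv_iff_real_differentiable)
  then show "odd_ext g differentiable (at y)" "deriv (odd_ext g) y = deriv g \<bar>y\<bar>"
    by (auto simp: real_differentiable_def DERIV_imp_deriv)
qed

lemma differentiable_delta:
  assumes "p differentiable (at y)" "q differentiable (at y)"
    and "f differentiable (at y)" "deriv f differentiable (at y)"
  shows "delta p q f differentiable (at y)"
  using assms unfolding delta_def[abs_def] by (intro differentiable_add differentiable_mult)

lemma delta_even_ext:
  assumes "y \<noteq> 0" "f differentiable (at \<bar>y\<bar>)"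
  shows "delta (even_ext p) (odd_ext q) (even_ext f) y = odd_ext (delta p q f) y"
  using differentiable_even_ext(2)[OF assms]
  by (simp add: delta_def even_ext_def odd_ext_def algebra_simps)

definition Dop1 :: "(real \<Rightarrow> real) \<Rightarrow> (real \<Rightarrow> real) \<Rightarrow> (real \<Rightarrow> real) \<Rightarrow> (real \<Rightarrow> real)
     \<Rightarrow> real \<Rightarrow> real" where
  "Dop1 w p q v y = even_ext p y * deriv v y + odd_ext q y * ((v y + v (- y)) / 2)
     + (even_ext p y * (deriv (even_ext w) y / even_ext w y) + deriv (even_ext p) y - odd_ext q y)
       * ((v y - v (- y)) / 2)"

lemma Dop1_even_ext:
  assumes "y \<noteq> 0" "f differentiable (at \<bar>y\<bar>)"
  shows "Dop1 w p q (even_ext f) y = odd_ext (delta p q f) y"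
proof -
  have "Dop1 w p q (even_ext f) y = delta (even_ext p) (odd_ext q) (even_ext f) y"
    by (simp add: Dop1_def delta_def even_ext_def)
  then show ?thesis using delta_even_ext[OF assms] by simp
qed

lemma Dop1_odd_ext:
  assumes "y \<noteq> 0"
    and "g differentiable (at \<bar>y\<bar>)" "w differentiable (at \<bar>y\<bar>)" "p differentiable (at \<bar>y\<bar>)"
  shows "Dop1 w p q (odd_ext g) y = - delta_adj w p q g \<bar>y\<bar>"
proof -
  have sgn_sq: "sgn y * sgn y = 1" using assms(1) by (simp add: sgn_if)
  have "Dop1 w p q (odd_ext g) y = p \<bar>y\<bar> * deriv g \<bar>y\<bar>
      + (sgn y * sgn y) * ((p \<bar>y\<bar> * (deriv w \<bar>y\<bar> / w \<bar>y\<bar>) + deriv p \<bar>y\<bar> - q \<bar>y\<bar>) * g \<bar>y\<bar>)"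
    using differentiable_odd_ext(2)[OF assms(1,2)] differentiable_even_ext(2)[OF assms(1,3)]
      differentiable_even_ext(2)[OF assms(1,4)]
    by (simp add: Dop1_def even_ext_def odd_ext_def algebra_simps)
  also have "\<dots> = - delta_adj w p q g \<bar>y\<bar>"
    unfolding sgn_sq by (simp add: delta_adj_def algebra_simps)
  finally show ?thesis .
qed

lemma upd_nth_same [simp]: "upd x j t $ j = t"
  by (simp add: upd_def)

lemma upd_upd [simp]: "upd (upd x j s) j t = upd x j t"
  by (simp add: upd_def vec_eq_iff)

lemma upd_nth_self [simp]: "upd x j (x $ j) = x"
  by (simp add: upd_def vec_eq_iff)

lemma refl_eq_upd: "refl j x = upd x j (- x $ j)"
  by (simp add: refl_def upd_def vec_eq_iff)

lemma Dop_eq_Dop1: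
  fixes f :: "real^'d::finite \<Rightarrow> real"
  assumes x: "x $ j \<in> symX c"
    and f: "\<And>t. t \<in> symX c \<Longrightarrow> f (upd x j t) = K * v t"
    and v: "v differentiable (at (x $ j))"
  shows "Dop w p q j f x = K * Dop1 (w j) (p j) (q j) v (x $ j)"
proof -
  have "((\<lambda>t. K * v t) has_real_derivative K * deriv v (x $ j)) (at (x $ j))"
    using v by (intro DERIV_cmult) (simp add: DERIV_deriv_iff_real_differentiable)
  then have "((\<lambda>t. f (upd x j t)) has_real_derivative K * deriv v (x $ j)) (at (x $ j))"
    by (rule has_field_derivative_transform_within_open[where S="symX c"])
      (use open_symX x f in auto)
  then have pd: "pderiv_at j f x = K * deriv v (x $ j)"
    by (simp add: pderiv_at_def DERIV_imp_deriv)
  have fx: "f x = K * v (x $ j)" using f[OF x] by simp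
  have fr: "f (refl j x) = K * v (- x $ j)"
    using f[OF symX_uminus[OF x]] by (simp add: refl_eq_upd)
  have factor_K: "A * (K * d) + B * ((K * y + K * z) / 2) + C * ((K * y - K * z) / 2)
      = K * (A * d + B * ((y + z) / 2) + C * ((y - z) / 2))" for A B C d y z :: real
    by (simp add: field_simps)
  show ?thesis unfolding Dop_def Dop1_def Let_def pd fx fr by (rule factor_K)
qed

lemma Dop_Dop_eq:
  fixes f :: "real^'d::finite \<Rightarrow> real"
  assumes x: "x $ j \<in> symX c"
    and f: "\<And>t. t \<in> symX c \<Longrightarrow> f (upd x j t) = K * u t"
    and u: "\<And>t. t \<in> symX c \<Longrightarrow> u differentiable (at t)"
    and v: "\<And>t. t \<in> symX c \<Longrightarrow> v differentiable (at t)"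
    and Du: "\<And>t. t \<in> symX c \<Longrightarrow> Dop1 (w j) (p j) (q j) u t = r * v t"
    and Dv: "\<And>t. t \<in> symX c \<Longrightarrow> Dop1 (w j) (p j) (q j) v t = s * u t"
  shows "Dop w p q j (Dop w p q j f) x = r * s * f x"
proof -
  have Df: "Dop w p q j f (upd x j t) = (K * r) * v t" if t: "t \<in> symX c" for t
  proof -
    have "Dop w p q j f (upd x j t) = K * Dop1 (w j) (p j) (q j) u t"
      using Dop_eq_Dop1[of "upd x j t" j c f K u] t f u by simp
    then show ?thesis using Du[OF t] by simp
  qed
  have "Dop w p q j (Dop w p q j f) x = (K * r) * Dop1 (w j) (p j) (q j) v (x $ j)"
    by (rule Dop_eq_Dop1[OF x Df v[OF x]])
  also have "\<dots> = r * s * (K * u (x $ j))" using Dv[OF x] by simp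
  also have "K * u (x $ j) = f x" using f[OF x] by simp
  finally show ?thesis .
qed

lemma PhiT_upd:
  "PhiT p q \<phi> lam a n (upd x j t)
     = (\<Prod>i\<in>UNIV - {j}. Phi1 (p i) (q i) (\<phi> i) (lam i) (a i) (n $ i) (x $ i))
       * Phi1 (p j) (q j) (\<phi> j) (lam j) (a j) (n $ j) t"
proof -
  have "PhiT p q \<phi> lam a n (upd x j t)
      = Phi1 (p j) (q j) (\<phi> j) (lam j) (a j) (n $ j) (upd x j t $ j)
        * (\<Prod>i\<in>UNIV - {j}. Phi1 (p i) (q i) (\<phi> i) (lam i) (a i) (n $ i) (upd x j t $ i))"
    unfolding PhiT_def by (rule prod.remove) auto
  also have "(\<Prod>i\<in>UNIV - {j}. Phi1 (p i) (q i) (\<phi> i) (lam i) (a i) (n $ i) (upd x j t $ i))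
      = (\<Prod>i\<in>UNIV - {j}. Phi1 (p i) (q i) (\<phi> i) (lam i) (a i) (n $ i) (x $ i))"
    by (rule prod.cong) (auto simp: upd_def)
  finally show ?thesis by simp
qed

lemma Dop_Dop_PhiT:
  fixes w p q :: "'d::finite \<Rightarrow> real \<Rightarrow> real"
  assumes x: "x $ j \<in> symX c"
    and phi_diff: "\<And>k y. y \<in> halfX c \<Longrightarrow> \<phi> j k differentiable (at y)"
    and delta_diff: "\<And>k y. y \<in> halfX c \<Longrightarrow> delta (p j) (q j) (\<phi> j k) differentiable (at y)"
    and w_diff: "\<And>y. y \<in> halfX c \<Longrightarrow> w j differentiable (at y)"
    and p_diff: "\<And>y. y \<in> halfX c \<Longrightarrow> p j differentiable (at y)"
    and eigen: "\<And>k y. y \<in> halfX c \<Longrightarrow>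
        a j * \<phi> j k y + delta_adj (w j) (p j) (q j) (delta (p j) (q j) (\<phi> j k)) y
          = lam j k * \<phi> j k y"
  shows "Dop w p q j (Dop w p q j (PhiT p q \<phi> lam a n)) x
      = (a j - lam j ((n $ j + 1) div 2)) * PhiT p q \<phi> lam a n x"
proof -
  define k where "k = (n $ j + 1) div 2"
  define Ev where "Ev = even_ext (\<phi> j k)"
  define Od where "Od = odd_ext (delta (p j) (q j) (\<phi> j k))"
  define K where "K = (\<Prod>i\<in>UNIV - {j}. Phi1 (p i) (q i) (\<phi> i) (lam i) (a i) (n $ i) (x $ i))"
  have t: "t \<noteq> 0" "\<bar>t\<bar> \<in> halfX c" if "t \<in> symX c" for t
    using that by (simp_all add: symX_nonzero flip: symX_iff_abs_halfX)
  have Ev_diff: "Ev differentiable (at t)" if "t \<in> symX c" for t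
    unfolding Ev_def using t[OF that] phi_diff by (blast intro: differentiable_even_ext)
  have Od_diff: "Od differentiable (at t)" if "t \<in> symX c" for t
    unfolding Od_def using t[OF that] delta_diff by (blast intro: differentiable_odd_ext)
  have DEv: "Dop1 (w j) (p j) (q j) Ev t = 1 * Od t" if "t \<in> symX c" for t
    unfolding Ev_def Od_def using t[OF that] phi_diff by (simp add: Dop1_even_ext)
  have DOd: "Dop1 (w j) (p j) (q j) Od t = (a j - lam j k) * Ev t" if "t \<in> symX c" for t
  proof -
    have "Dop1 (w j) (p j) (q j) Od t
        = - delta_adj (w j) (p j) (q j) (delta (p j) (q j) (\<phi> j k)) \<bar>t\<bar>"
      unfolding Od_def using t[OF that] delta_diff w_diff p_diff by (simp add: Dop1_odd_ext)
    also have "\<dots> = (a j - lam j k) * Ev t"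
      using eigen[OF t(2)[OF that]] by (simp add: Ev_def even_ext_def algebra_simps)
    finally show ?thesis .
  qed
  show ?thesis
  proof (cases "even (n $ j)")
    case True
    then have "n $ j div 2 = k" unfolding k_def by presburger
    with True have f: "PhiT p q \<phi> lam a n (upd x j t) = (K / sqrt 2) * Ev t" for t
      by (simp add: PhiT_upd K_def Phi1_def Ev_def)
    have "Dop w p q j (Dop w p q j (PhiT p q \<phi> lam a n)) x
        = 1 * (a j - lam j k) * PhiT p q \<phi> lam a n x"
      using x f Ev_diff Od_diff DEv DOd by (rule Dop_Dop_eq)
    then show ?thesis by (simp add: k_def)
  next
    case False
    have f: "PhiT p q \<phi> lam a n (upd x j t) = (- K / sqrt 2 / sqrt (lam j k - a j)) * Od t"
      if "t \<in> symX c" for t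
      using False t[OF that] phi_diff
      by (simp add: PhiT_upd K_def Phi1_def Od_def k_def delta_even_ext)
    have "Dop w p q j (Dop w p q j (PhiT p q \<phi> lam a n)) x
        = (a j - lam j k) * 1 * PhiT p q \<phi> lam a n x"
      using x f Od_diff Ev_diff DOd DEv by (rule Dop_Dop_eq)
    then show ?thesis by (simp add: k_def)
  qed
qed

theorem mainTheorem3:
  fixes c :: ereal
    and w p q :: "'d::finite \<Rightarrow> real \<Rightarrow> real"
    and a :: "'d \<Rightarrow> real"
    and \<phi> :: "'d \<Rightarrow> nat \<Rightarrow> real \<Rightarrow> real"
    and lam :: "'d \<Rightarrow> nat \<Rightarrow> real"
    and n :: "nat^'d"
  assumes c_pos: "0 < c"
    and w_pos: "\<And>i x. x \<in> halfX c \<Longrightarrow> w i x > 0"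
    and w_C2: "\<And>i. Ck_on 2 (halfX c) (w i)"
    and p_C2: "\<And>i. Ck_on 2 (halfX c) (p i)"
    and p_nz: "\<And>i x. x \<in> halfX c \<Longrightarrow> p i x \<noteq> 0"
    and q_C1: "\<And>i. Ck_on 1 (halfX c) (q i)"
    and a_nonneg: "\<And>i. a i \<ge> 0"
    and onb: "\<And>i. ONB_L2 (wmeasure (halfX c) (w i)) (\<phi> i)"
    and phi_smooth: "\<And>i k. Cinf_on (halfX c) (\<phi> i k)"
    and eigen: "\<And>i k x. x \<in> halfX c \<Longrightarrow>
        a i * \<phi> i k x + delta_adj (w i) (p i) (q i) (delta (p i) (q i) (\<phi> i k)) x
          = lam i k * \<phi> i k x"
    and lam_mono: "\<And>i. strict_mono (lam i)"
    and lam_inf: "\<And>i. filterlim (lam i) at_top sequentially"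
    and delta_L2: "\<And>i k. inL2 (wmeasure (halfX c) (w i)) (delta (p i) (q i) (\<phi> i k))"
    and ibp: "\<And>i k m. inner_L2 (wmeasure (halfX c) (w i))
                 (delta (p i) (q i) (\<phi> i k)) (delta (p i) (q i) (\<phi> i m))
               = inner_L2 (wmeasure (halfX c) (w i))
                 (delta_adj (w i) (p i) (q i) (delta (p i) (q i) (\<phi> i k))) (\<phi> i m)"
    and a_eq: "\<And>i. a i = lam i 0"
  shows "\<forall>x. (\<forall>i. x $ i \<in> symX c) \<longrightarrow>
     Lop w p q (\<Sum>i\<in>UNIV. a i) (PhiT p q \<phi> lam a n) x
       = (\<Sum>i\<in>UNIV. lam i ((n $ i + 1) div 2)) * PhiT p q \<phi> lam a n x"
proof (intro allI impI)
  \<comment> \<open>The identity is pointwise: only regularity and the eigenvalue equation are used, not the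
    spectral hypotheses (orthonormality, monotonicity of \<open>lam\<close>, \<open>a = lam 0\<close>, ...).\<close>
  fix x :: "real^'d"
  assume x: "\<forall>i. x $ i \<in> symX c"
  have C1: "f differentiable (at y)" if "Ck_on k (halfX c) f" "0 < k" "y \<in> halfX c" for k f y
    using Ck_on_differentiable[OF that(1,2,3)] by simp
  have C2: "deriv f differentiable (at y)" if "Ck_on 2 (halfX c) f" "y \<in> halfX c" for f y
    using Ck_on_differentiable[OF that(1) _ that(2), of 1] by simp
  have phi_C2: "Ck_on 2 (halfX c) (\<phi> i k)" for i k
    using phi_smooth by (simp add: Cinf_on_def)
  have "Dop w p q i (Dop w p q i (PhiT p q \<phi> lam a n)) x
      = (a i - lam i ((n $ i + 1) div 2)) * PhiT p q \<phi> lam a n x" for i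
    using x eigen C1[OF phi_C2] C1[OF w_C2] C1[OF p_C2]
    by (intro Dop_Dop_PhiT)
      (auto intro: differentiable_delta C1[OF phi_C2] C1[OF p_C2] C1[OF q_C1] C2[OF phi_C2])
  then have "Lop w p q (\<Sum>i\<in>UNIV. a i) (PhiT p q \<phi> lam a n) x
      = (\<Sum>i\<in>UNIV. a i) * PhiT p q \<phi> lam a n x
        - (\<Sum>i\<in>UNIV. (a i - lam i ((n $ i + 1) div 2)) * PhiT p q \<phi> lam a n x)"
    by (simp only: Lop_def)
  then show "Lop w p q (\<Sum>i\<in>UNIV. a i) (PhiT p q \<phi> lam a n) x
      = (\<Sum>i\<in>UNIV. lam i ((n $ i + 1) div 2)) * PhiT p q \<phi> lam a n x"
    by (simp add: sum_subtractf sum_distrib_left sum_distrib_right algebra_simps)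
qed

end
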